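(* Let $A=\mathbf a\cdot\boldsymbol\sigma$ and $B=\mathbf b\cdot\boldsymbol\sigma$ with $\mathbf a,\mathbf b\in\mathbb{C}^3$, and $q\in\mathbb R$. Then $$AB-qBA=(1-q)(\mathbf a\cdot\mathbf b)\,I+i(1+q)(\mathbf a\times\mathbf b)\cdot\boldsymbol\sigma,$$ $$\|AB-qBA\|_F^2=2\big((1-q)^2|\mathbf a\cdot\mathbf b|^2+(1+q)^2|\mathbf a\times\mathbf b|^2\big),$$ and $\|AB-qBA\|_F^2\le (1+q^2)\|A\|_F^2\|B\|_F^2$.
   Context: $\sigma_1,\sigma_2,\sigma_3$ are the Pauli matrices, $\mathbf r\cdot\boldsymbol\sigma=\sum_{i=1}^3 r_i\sigma_i$, $\mathbf a\cdot\mathbf b=\sum_i a_ib_i$ (bilinear, no conjugation), $\mathbf a\times\mathbf b$ is the (bilinear) cross product, $|\cdot|$ is the Hermitian norm on $\mathbb{C}^3$, $I$ is the $2\times2$ identity, and $\|X\|_F=\sqrt{\operatorname{tr}(XX^\dagger)}$ is the Frobenius norm. *)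

theory Defs
  imports "HOL-Analysis.Analysis"
begin

type_synonym cmat2 = "complex ^ 2 ^ 2"

definition mat2 :: "complex \<Rightarrow> complex \<Rightarrow> complex \<Rightarrow> complex \<Rightarrow> cmat2" where
  "mat2 a b c d = (\<chi> i j. if i = 1 then (if j = 1 then a else b) else (if j = 1 then c else d))"

definition sigma1 :: cmat2 where "sigma1 = mat2 0 1 1 0"
definition sigma2 :: cmat2 where "sigma2 = mat2 0 (-\<i>) \<i> 0"
definition sigma3 :: cmat2 where "sigma3 = mat2 1 0 0 (-1)"

definition pauli :: "3 \<Rightarrow> cmat2" where
  "pauli k = (if k = 1 then sigma1 else if k = 2 then sigma2 else sigma3)"

definition pauli_dot :: "complex ^ 3 \<Rightarrow> cmat2" where
  "pauli_dot r = (\<Sum>k\<in>UNIV. (\<chi> i j. r $ k * (pauli k $ i $ j)))"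

text \<open>bilinear dot product (no conjugation)\<close>
definition bdot :: "complex ^ 3 \<Rightarrow> complex ^ 3 \<Rightarrow> complex" where
  "bdot a b = (\<Sum>i\<in>UNIV. a $ i * b $ i)"

definition bcross :: "complex ^ 3 \<Rightarrow> complex ^ 3 \<Rightarrow> complex ^ 3" where
  "bcross a b = vector [a$2 * b$3 - a$3 * b$2, a$3 * b$1 - a$1 * b$3, a$1 * b$2 - a$2 * b$1]"

definition ctrace :: "cmat2 \<Rightarrow> complex" where
  "ctrace X = (\<Sum>i\<in>UNIV. X $ i $ i)"

definition dagger :: "cmat2 \<Rightarrow> cmat2" where
  "dagger X = (\<chi> i j. cnj (X $ j $ i))"

text \<open>Frobenius norm sqrt(tr(X X^dagger)); tr(X X^dagger) is real and nonnegative.\<close>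
definition frob :: "cmat2 \<Rightarrow> real" where
  "frob X = sqrt (Re (ctrace (X ** dagger X)))"

end

theory Submission imports Defs begin

text \<open>Everything is computed entrywise in the explicit representation
  \<open>r\<cdot>\<sigma> = [[r\<^sub>3, r\<^sub>1 - i r\<^sub>2], [r\<^sub>1 + i r\<^sub>2, -r\<^sub>3]]\<close>.
  The product identity is the Pauli multiplication rule
  \<open>(a\<cdot>\<sigma>)(b\<cdot>\<sigma>) = (a\<cdot>b) I + i (a\<times>b)\<cdot>\<sigma>\<close> together with the antisymmetry of the cross product.
  For \<open>M = c I + w (d\<cdot>\<sigma>)\<close> the parallelogram law on the pairs of entries
  \<open>c \<plusminus> w d\<^sub>3\<close> and \<open>w (d\<^sub>1 \<plusminus> i d\<^sub>2)\<close> gives \<open>\<parallel>M\<parallel>\<^sub>F\<^sup>2 = 2(|c|\<^sup>2 + |w|\<^sup>2 |d|\<^sup>2)\<close>.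
  The inequality then follows from the two Lagrange identities, which bound both
  \<open>|a\<cdot>b|\<^sup>2\<close> and \<open>|a\<times>b|\<^sup>2\<close> by \<open>|a|\<^sup>2 |b|\<^sup>2\<close>, and from \<open>(1-q)\<^sup>2 + (1+q)\<^sup>2 = 2(1+q\<^sup>2)\<close>.\<close>

lemma pauli_dot_entries:
  "pauli_dot r $ 1 $ 1 = r$3" "pauli_dot r $ 1 $ 2 = r$1 - \<i> * r$2"
  "pauli_dot r $ 2 $ 1 = r$1 + \<i> * r$2" "pauli_dot r $ 2 $ 2 = - r$3"
  by (simp_all add: pauli_dot_def sum_component sum_3 pauli_def sigma1_def sigma2_def
      sigma3_def mat2_def)

lemma bcross_components:
  "bcross a b $ 1 = a$2 * b$3 - a$3 * b$2"
  "bcross a b $ 2 = a$3 * b$1 - a$1 * b$3"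
  "bcross a b $ 3 = a$1 * b$2 - a$2 * b$1"
  by (simp_all add: bcross_def)

lemma norm_vec3_squared:
  "(norm (x :: complex ^ 3))\<^sup>2 = (cmod (x$1))\<^sup>2 + (cmod (x$2))\<^sup>2 + (cmod (x$3))\<^sup>2"
  by (simp add: norm_vec_def L2_set_def sum_3)

lemma frob_squared_entries:
  "(frob X)\<^sup>2 = (cmod (X$1$1))\<^sup>2 + (cmod (X$1$2))\<^sup>2 + (cmod (X$2$1))\<^sup>2 + (cmod (X$2$2))\<^sup>2"
proof -
  have "Re (ctrace (X ** dagger X)) =
      (cmod (X$1$1))\<^sup>2 + (cmod (X$1$2))\<^sup>2 + (cmod (X$2$1))\<^sup>2 + (cmod (X$2$2))\<^sup>2"
    unfolding cmod_power2
    by (simp add: ctrace_def dagger_def matrix_matrix_mult_def sum_2 power2_eq_square)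
  then show ?thesis
    by (simp add: frob_def)
qed

lemma cmod_parallelogram:
  "(cmod (u + v))\<^sup>2 + (cmod (u - v))\<^sup>2 = 2 * (cmod u)\<^sup>2 + 2 * (cmod v)\<^sup>2"
  unfolding cmod_power2 by (simp add: power2_eq_square algebra_simps)

lemma pauli_dot_q_commutator:
  fixes z :: complex
  shows "pauli_dot a ** pauli_dot b - (\<chi> i j. z * (pauli_dot b ** pauli_dot a) $ i $ j) =
    (\<chi> i j. (1 - z) * bdot a b * (mat 1 :: cmat2) $ i $ j + \<i> * (1 + z) * pauli_dot (bcross a b) $ i $ j)"
  by (simp add: vec_eq_iff forall_2 matrix_matrix_mult_def sum_2 pauli_dot_entries
      bcross_components bdot_def sum_3 mat_def; simp add: algebra_simps)

lemma frob_scalar_plus_pauli_dot: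
  "(frob (\<chi> i j. c * (mat 1 :: cmat2) $ i $ j + w * pauli_dot d $ i $ j))\<^sup>2 =
    2 * ((cmod c)\<^sup>2 + (cmod w)\<^sup>2 * (norm d)\<^sup>2)"
proof -
  have "(frob (\<chi> i j. c * (mat 1 :: cmat2) $ i $ j + w * pauli_dot d $ i $ j))\<^sup>2 =
      ((cmod (c + w * d$3))\<^sup>2 + (cmod (c - w * d$3))\<^sup>2)
      + ((cmod (w * d$1 + w * (\<i> * d$2)))\<^sup>2 + (cmod (w * d$1 - w * (\<i> * d$2)))\<^sup>2)"
    by (simp add: frob_squared_entries pauli_dot_entries mat_def algebra_simps)
  also have "\<dots> = 2 * (cmod c)\<^sup>2 + 2 * (cmod (w * d$3))\<^sup>2
      + (2 * (cmod (w * d$1))\<^sup>2 + 2 * (cmod (w * (\<i> * d$2)))\<^sup>2)"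
    by (simp only: cmod_parallelogram)
  also have "\<dots> = 2 * ((cmod c)\<^sup>2 + (cmod w)\<^sup>2 * (norm d)\<^sup>2)"
    by (simp add: norm_vec3_squared norm_mult algebra_simps)
  finally show ?thesis .
qed

lemma frob_pauli_dot: "(frob (pauli_dot d))\<^sup>2 = 2 * (norm d)\<^sup>2"
  using frob_scalar_plus_pauli_dot[of 0 1 d] by (simp add: vec_eq_iff)

lemma cmod_bdot_squared_le: "(cmod (bdot a b))\<^sup>2 \<le> (norm a)\<^sup>2 * (norm b)\<^sup>2"
proof -
  have "(cmod (bdot a b))\<^sup>2 + (cmod (a$1 * cnj (b$2) - a$2 * cnj (b$1)))\<^sup>2
      + (cmod (a$2 * cnj (b$3) - a$3 * cnj (b$2)))\<^sup>2 + (cmod (a$3 * cnj (b$1) - a$1 * cnj (b$3)))\<^sup>2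
      = (norm a)\<^sup>2 * (norm b)\<^sup>2"
    unfolding norm_vec3_squared bdot_def sum_3 cmod_power2
    by (simp add: power2_eq_square algebra_simps)
  then show ?thesis
    by (smt (verit) zero_le_power2)
qed

lemma norm_bcross_squared_le: "(norm (bcross a b))\<^sup>2 \<le> (norm a)\<^sup>2 * (norm b)\<^sup>2"
proof -
  have "(cmod (a$1 * cnj (b$1) + a$2 * cnj (b$2) + a$3 * cnj (b$3)))\<^sup>2 + (norm (bcross a b))\<^sup>2
      = (norm a)\<^sup>2 * (norm b)\<^sup>2"
    unfolding norm_vec3_squared bcross_components cmod_power2
    by (simp add: power2_eq_square algebra_simps)
  then show ?thesis
    by (smt (verit) zero_le_power2)
qed

theorem mainTheorem7:
  fixes a b :: "complex ^ 3" and q :: real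
  defines "A \<equiv> pauli_dot a" and "B \<equiv> pauli_dot b"
  shows "A ** B - (\<chi> i j. complex_of_real q * (B ** A) $ i $ j) =
           (\<chi> i j. (1 - complex_of_real q) * bdot a b * (mat 1 :: cmat2) $ i $ j
                    + \<i> * (1 + complex_of_real q) * pauli_dot (bcross a b) $ i $ j)
       \<and> (frob (A ** B - (\<chi> i j. complex_of_real q * (B ** A) $ i $ j)))\<^sup>2 =
           2 * ((1 - q)\<^sup>2 * (cmod (bdot a b))\<^sup>2 + (1 + q)\<^sup>2 * (norm (bcross a b))\<^sup>2)
       \<and> (frob (A ** B - (\<chi> i j. complex_of_real q * (B ** A) $ i $ j)))\<^sup>2
           \<le> (1 + q\<^sup>2) * (frob A)\<^sup>2 * (frob B)\<^sup>2"
proof -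
  note identity =
    pauli_dot_q_commutator[where a = a and b = b and z = "complex_of_real q", folded A_def B_def]
  have "1 - complex_of_real q = complex_of_real (1 - q)" "1 + complex_of_real q = complex_of_real (1 + q)"
    by simp_all
  then have "cmod ((1 - complex_of_real q) * bdot a b) = \<bar>1 - q\<bar> * cmod (bdot a b)"
    "cmod (\<i> * (1 + complex_of_real q)) = \<bar>1 + q\<bar>"
    by (simp_all only: norm_mult norm_of_real norm_ii mult_1)
  then have frob_eq: "(frob (A ** B - (\<chi> i j. complex_of_real q * (B ** A) $ i $ j)))\<^sup>2 =
      2 * ((1 - q)\<^sup>2 * (cmod (bdot a b))\<^sup>2 + (1 + q)\<^sup>2 * (norm (bcross a b))\<^sup>2)"
    by (simp add: identity frob_scalar_plus_pauli_dot power_mult_distrib)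
  have "2 * ((1 - q)\<^sup>2 * (cmod (bdot a b))\<^sup>2 + (1 + q)\<^sup>2 * (norm (bcross a b))\<^sup>2)
      \<le> 2 * ((1 - q)\<^sup>2 * ((norm a)\<^sup>2 * (norm b)\<^sup>2) + (1 + q)\<^sup>2 * ((norm a)\<^sup>2 * (norm b)\<^sup>2))"
    using cmod_bdot_squared_le norm_bcross_squared_le by (intro mult_left_mono add_mono) auto
  also have "\<dots> = (1 + q\<^sup>2) * (frob A)\<^sup>2 * (frob B)\<^sup>2"
    unfolding A_def B_def frob_pauli_dot by (simp add: power2_eq_square algebra_simps)
  finally show ?thesis
    using identity frob_eq by simp
qed

end
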